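(* Let $\mathcal{A}$ be a two-dimensional pVASS and $S$ a BSCC of $\mathscr{C}_\mathcal{A}$ with $t_S(2)<0$. Let $G\in[0,1]^{S\times S}$ be the matrix where $G[q,r]$ is the probability that a run of $\mathcal{A}_2$ starting in $q(1)$ visits $r(0)$ before visiting any configuration $r'(0)$ with $r'\ne r$. Then the directed graph of $G$ (edge $q\to r$ iff $G[q,r]>0$) has exactly one bottom strongly connected component.
   Context: A pVASS of dimension $d$ is $\mathcal{A}=(Q,\gamma,W)$ ($Q$ finite, rules $\gamma\subseteq Q\times\{-1,0,1\}^d\times Q$, weights $W:\gamma\to\mathbb{N}^+$), with the standing assumption that the graph on $Q$ induced by rules is weakly connected and between two states there is at most one rule. Configurations $p\vec v\in Q\times\mathbb{N}^d$; a rule $(p,\kappa,q)$ is enabled if $\vec v_i>0$ whenever $\kappa_i=-1$; the Markov chain on configurations has a self-loop with probability 1 if no rule is enabled, and otherwise each enabled rule of weight $\ell$ gives $p\vec v\to q(\vec v+\kappa)$ with probability $\ell/T$, $T$ total enabled weight. $\mathscr{C}_\mathcal{A}$: finite Markov chain on $Q$ with $p\to q$ with probability $W((p,\kappa,q))/T_p$ ($T_p$ total weight of rules from $p$); BSCC = bottom strongly connected component; for a BSCC $S$, $\mu_S$ is its invariant distribution and the trend is $t_S=\sum_{s\in S}\mu_S(s)\sum_{(s,\kappa,t)\in\gamma}\kappa W((s,\kappa,t))/T_s$. $\mathcal{A}_2$ is the one-dimensional pVASS with a rule $(s,\kappa(2),t)$ of weight $\ell$ for each rule $(s,\kappa,t)$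 of weight $\ell$ of $\mathcal{A}$ (configurations $q(k)$, $k\in\mathbb{N}$). (Because $t_S(2)<0$, $G$ is stochastic.) *)

theory Defs
  imports Complex_Main
begin

text \<open>Probabilistic VASS. Counter vectors and update vectors are functions on nat;
  only the components 1..dim are meaningful (update vectors are 0 elsewhere).\<close>

record 'q pvass =
  states :: "'q set"
  rules  :: "('q \<times> (nat \<Rightarrow> int) \<times> 'q) set"
  weight :: "('q \<times> (nat \<Rightarrow> int) \<times> 'q) \<Rightarrow> nat"
  dim    :: nat

definition rule_edges :: "'q pvass \<Rightarrow> ('q \<times> 'q) set" where
  "rule_edges A = {(p, q). \<exists>\<kappa>. (p, \<kappa>, q) \<in> rules A}"

definition wf_pvass :: "'q pvass \<Rightarrow> bool" where
  "wf_pvass A \<longleftrightarrow>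
     finite (states A) \<and> states A \<noteq> {} \<and>
     (\<forall>(p, \<kappa>, q) \<in> rules A. p \<in> states A \<and> q \<in> states A \<and>
        (\<forall>i. (i \<in> {1..dim A} \<longrightarrow> \<kappa> i \<in> {-1, 0, 1}) \<and> (i \<notin> {1..dim A} \<longrightarrow> \<kappa> i = 0))) \<and>
     (\<forall>\<rho> \<in> rules A. weight A \<rho> > 0) \<and>
     (\<forall>p \<in> states A. \<forall>q \<in> states A. (p, q) \<in> (rule_edges A \<union> (rule_edges A)\<inverse>)\<^sup>*) \<and>
     (\<forall>p \<kappa> \<kappa>' q. (p, \<kappa>, q) \<in> rules A \<longrightarrow> (p, \<kappa>', q) \<in> rules A \<longrightarrow> \<kappa> = \<kappa>')"

definition is_bscc :: "'a set \<Rightarrow> ('a \<times> 'a) set \<Rightarrow> 'a set \<Rightarrow> bool" where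
  "is_bscc V E C \<longleftrightarrow> C \<noteq> {} \<and> C \<subseteq> V \<and>
     (\<forall>x \<in> C. \<forall>y \<in> C. (x, y) \<in> (E \<inter> (V \<times> V))\<^sup>*) \<and>
     (\<forall>x \<in> C. \<forall>y \<in> V. (x, y) \<in> E \<longrightarrow> y \<in> C)"

definition out_weight :: "'q pvass \<Rightarrow> 'q \<Rightarrow> real" where
  "out_weight A p = (\<Sum>\<rho> \<in> {\<rho> \<in> rules A. fst \<rho> = p}. real (weight A \<rho>))"

definition CA_prob :: "'q pvass \<Rightarrow> 'q \<Rightarrow> 'q \<Rightarrow> real" where
  "CA_prob A p q = (\<Sum>\<rho> \<in> {\<rho> \<in> rules A. fst \<rho> = p \<and> snd (snd \<rho>) = q}. real (weight A \<rho>))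
                    / out_weight A p"

definition is_bscc_CA :: "'q pvass \<Rightarrow> 'q set \<Rightarrow> bool" where
  "is_bscc_CA A S \<longleftrightarrow> is_bscc (states A) {(p, q). CA_prob A p q > 0} S"

definition invariant_dist :: "'q pvass \<Rightarrow> 'q set \<Rightarrow> ('q \<Rightarrow> real) \<Rightarrow> bool" where
  "invariant_dist A S \<mu> \<longleftrightarrow> (\<forall>s. s \<notin> S \<longrightarrow> \<mu> s = 0) \<and> (\<forall>s \<in> S. \<mu> s \<ge> 0) \<and>
     (\<Sum>s \<in> S. \<mu> s) = 1 \<and> (\<forall>s \<in> S. \<mu> s = (\<Sum>s' \<in> S. \<mu> s' * CA_prob A s' s))"

definition mu_S :: "'q pvass \<Rightarrow> 'q set \<Rightarrow> 'q \<Rightarrow> real" where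
  "mu_S A S = (THE \<mu>. invariant_dist A S \<mu>)"

definition trend :: "'q pvass \<Rightarrow> 'q set \<Rightarrow> nat \<Rightarrow> real" where
  "trend A S i = (\<Sum>s \<in> S. mu_S A S s *
      (\<Sum>\<rho> \<in> {\<rho> \<in> rules A. fst \<rho> = s}. real_of_int (fst (snd \<rho>) i) * real (weight A \<rho>) / out_weight A s))"

type_synonym 'q config = "'q \<times> (nat \<Rightarrow> nat)"

definition enabled :: "'q pvass \<Rightarrow> 'q config \<Rightarrow> ('q \<times> (nat \<Rightarrow> int) \<times> 'q) set" where
  "enabled A c = {\<rho> \<in> rules A. fst \<rho> = fst c \<and> (\<forall>i. fst (snd \<rho>) i = -1 \<longrightarrow> snd c i > 0)}"

definition apply_rule :: "('q \<times> (nat \<Rightarrow> int) \<times> 'q) \<Rightarrow> 'q config \<Rightarrow> 'q config" where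
  "apply_rule \<rho> c = (snd (snd \<rho>), \<lambda>i. nat (int (snd c i) + fst (snd \<rho>) i))"

definition enabled_weight :: "'q pvass \<Rightarrow> 'q config \<Rightarrow> real" where
  "enabled_weight A c = (\<Sum>\<rho> \<in> enabled A c. real (weight A \<rho>))"

fun reach_within :: "'q pvass \<Rightarrow> 'q config set \<Rightarrow> 'q config set \<Rightarrow> nat \<Rightarrow> 'q config \<Rightarrow> real" where
  "reach_within A T B 0 c = (if c \<in> T then 1 else 0)"
| "reach_within A T B (Suc n) c =
     (if c \<in> T then 1 else if c \<in> B then 0
      else if enabled A c = {} then reach_within A T B n c
      else (\<Sum>\<rho> \<in> enabled A c. real (weight A \<rho>) / enabled_weight A c
               * reach_within A T B n (apply_rule \<rho> c)))"

text \<open>Probability that a run from c visits T before visiting B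
  (limit of the step-bounded probabilities, by continuity of measure).\<close>
definition reach_before :: "'q pvass \<Rightarrow> 'q config set \<Rightarrow> 'q config set \<Rightarrow> 'q config \<Rightarrow> real" where
  "reach_before A T B c = (SUP n. reach_within A T B n c)"

definition proj2 :: "'q pvass \<Rightarrow> 'q pvass" where
  "proj2 A = \<lparr> states = states A,
     rules = {(s, (\<lambda>_. 0)(1 := \<kappa> 2), t) | s \<kappa> t. (s, \<kappa>, t) \<in> rules A},
     weight = (\<lambda>(s, _, t). weight A (THE \<rho>. \<rho> \<in> rules A \<and> fst \<rho> = s \<and> snd (snd \<rho>) = t)),
     dim = 1 \<rparr>"

definition cfg1 :: "'q \<Rightarrow> nat \<Rightarrow> 'q config" where
  "cfg1 q k = (q, (\<lambda>_. 0)(1 := k))"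

definition Gmat :: "'q pvass \<Rightarrow> 'q set \<Rightarrow> 'q \<Rightarrow> 'q \<Rightarrow> real" where
  "Gmat A S q r = reach_before (proj2 A) {cfg1 r 0} {cfg1 r' 0 | r'. r' \<noteq> r} (cfg1 q 1)"

end

theory Submission
  imports Defs "Jordan_Normal_Form.Determinant"
begin

text \<open>Read the second counter as a height. An edge q \<rightarrow> r of G is witnessed by any walk
  in the BSCC from height 1 that first reaches height 0 in r. If from some state the height
  could never be pushed below its starting value, then the least height reachable at each
  state is a potential that no rule decreases by more than its second update, and averaging
  the updates with the invariant distribution yields t_S(2) \<ge> 0. So under t_S(2) < 0 every
  state can descend from any height to 0. For two states q1, q2 walk from q1 to q2 high
  enough above 0 and then descend: the state r where height 0 is reached is a descendant of
  both in G, so every bottom component of G containing q1 or q2 contains r.\<close>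

lemma is_bscc_closed_rtrancl:
  assumes "is_bscc V E C" and "(x, y) \<in> (E \<inter> V \<times> V)\<^sup>*" and "x \<in> C"
  shows "y \<in> C"
  using assms(2,3) by induction (use assms(1) in \<open>auto simp: is_bscc_def\<close>)

lemma is_bscc_exists:
  assumes "finite V" and "V \<noteq> {}"
  shows "\<exists>C. is_bscc V E C"
proof -
  let ?E = "E \<inter> V \<times> V"
  define reach where "reach x = {y \<in> V. (x, y) \<in> ?E\<^sup>*}" for x
  have finite_reach: "finite (reach y)" for y
    using \<open>finite V\<close> unfolding reach_def by simp
  obtain x0 where "x0 \<in> V" using \<open>V \<noteq> {}\<close> by blast
  \<comment> \<open>a state whose reachable set is smallest is reachable from all its descendants\<close>
  obtain x where x: "x \<in> V" and least: "\<And>y. y \<in> V \<Longrightarrow> card (reach x) \<le> card (reach y)"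
    using ex_has_least_nat[of "\<lambda>x. x \<in> V" x0 "\<lambda>x. card (reach x)"] \<open>x0 \<in> V\<close> by blast
  have returns: "(y, x) \<in> ?E\<^sup>*" if y: "y \<in> reach x" for y
  proof -
    have "reach y \<subseteq> reach x" using y unfolding reach_def by (auto intro: rtrancl_trans)
    moreover have "card (reach x) \<le> card (reach y)" using least y unfolding reach_def by blast
    ultimately have "reach y = reach x" using finite_reach by (meson card_seteq)
    moreover have "x \<in> reach x" using x unfolding reach_def by simp
    ultimately show ?thesis unfolding reach_def by blast
  qed
  have "is_bscc V E (reach x)"
    unfolding is_bscc_def
  proof (intro conjI ballI impI)
    show "reach x \<noteq> {}" using x unfolding reach_def by auto
    show "reach x \<subseteq> V" unfolding reach_def by auto
  next
    fix y z assume "y \<in> reach x" and "z \<in> reach x"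
    then show "(y, z) \<in> ?E\<^sup>*"
      using returns unfolding reach_def by (blast intro: rtrancl_trans)
  next
    fix y z assume "y \<in> reach x" and "z \<in> V" and "(y, z) \<in> E"
    then show "z \<in> reach x"
      unfolding reach_def by (blast intro: rtrancl_into_rtrancl)
  qed
  then show ?thesis by blast
qed

lemma ex1_is_bscc_if_common_descendants:
  assumes "finite V" and "V \<noteq> {}"
    and common: "\<And>x y. x \<in> V \<Longrightarrow> y \<in> V \<Longrightarrow>
                   \<exists>z. (x, z) \<in> (E \<inter> V \<times> V)\<^sup>* \<and> (y, z) \<in> (E \<inter> V \<times> V)\<^sup>*"
  shows "\<exists>!C. is_bscc V E C"
proof (rule ex_ex1I)
  show "\<exists>C. is_bscc V E C" using is_bscc_exists[OF assms(1,2)] .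
next
  have subset: "C \<subseteq> C'" if C: "is_bscc V E C" and C': "is_bscc V E C'"
    and "z \<in> C" and "z \<in> C'" for C C' z
  proof
    fix w assume "w \<in> C"
    then have "(z, w) \<in> (E \<inter> V \<times> V)\<^sup>*" using C \<open>z \<in> C\<close> unfolding is_bscc_def by blast
    then show "w \<in> C'" using is_bscc_closed_rtrancl[OF C'] \<open>z \<in> C'\<close> by blast
  qed
  fix C1 C2 assume C1: "is_bscc V E C1" and C2: "is_bscc V E C2"
  obtain x y where "x \<in> C1" "y \<in> C2" "x \<in> V" "y \<in> V"
    using C1 C2 unfolding is_bscc_def by blast
  then obtain z where "z \<in> C1" "z \<in> C2"
    using common is_bscc_closed_rtrancl[OF C1] is_bscc_closed_rtrancl[OF C2] by metis
  then show "C1 = C2" using subset C1 C2 by blast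
qed

lemma reach_within_nonneg: "reach_within A T B n c \<ge> 0"
  by (induction n arbitrary: c)
     (auto intro!: sum_nonneg mult_nonneg_nonneg simp: enabled_weight_def sum_nonneg)

lemma reach_within_le_1: "reach_within A T B n c \<le> 1"
proof (induction n arbitrary: c)
  case (Suc n c)
  let ?E = "enabled A c" and ?w = "enabled_weight A c"
  have "(\<Sum>\<rho>\<in>?E. real (weight A \<rho>) / ?w * reach_within A T B n (apply_rule \<rho> c))
        \<le> (\<Sum>\<rho>\<in>?E. real (weight A \<rho>) / ?w)"
    using Suc.IH by (intro sum_mono mult_right_le_one_le) (auto simp: enabled_weight_def sum_nonneg reach_within_nonneg)
  also have "\<dots> = (\<Sum>\<rho>\<in>?E. real (weight A \<rho>)) / ?w" by (simp add: sum_divide_distrib)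
  also have "\<dots> \<le> 1" unfolding enabled_weight_def by (simp add: divide_le_eq_1)
  finally show ?case using Suc.IH by auto
qed simp

lemma reach_within_le_reach_before: "reach_within A T B n c \<le> reach_before A T B c"
  unfolding reach_before_def
  by (rule cSUP_upper) (auto intro!: bdd_aboveI[of _ 1] simp: reach_within_le_1)

lemma cfg1_eq_iff: "cfg1 q k = cfg1 r k' \<longleftrightarrow> q = r \<and> k = k'"
  unfolding cfg1_def by (auto dest: fun_cong[where x = 1])

lemma left_fixpoint_of_unit_row_sums:
  fixes P :: "nat \<Rightarrow> nat \<Rightarrow> real"
  assumes "n > 0" and rows: "\<And>i. i < n \<Longrightarrow> (\<Sum>j<n. P i j) = 1"
  shows "\<exists>v \<in> carrier_vec n. v \<noteq> 0\<^sub>v n \<and> (\<forall>j<n. v $ j = (\<Sum>i<n. v $ i * P i j))"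
proof -
  \<comment> \<open>P - I kills the all-ones vector, so it is singular, and hence so is its transpose\<close>
  define M where "M = mat n n (\<lambda>(i, j). P i j - (if i = j then 1 else 0))"
  have M: "M \<in> carrier_mat n n" unfolding M_def by simp
  have "M *\<^sub>v vec n (\<lambda>_. 1) = 0\<^sub>v n"
  proof (rule eq_vecI)
    fix i assume "i < dim_vec (0\<^sub>v n :: real vec)"
    then have i: "i < n" by simp
    have "(M *\<^sub>v vec n (\<lambda>_. 1)) $ i = (\<Sum>j<n. P i j - (if i = j then 1 else 0))"
      using i unfolding M_def by (auto intro!: sum.cong simp: lessThan_atLeast0 scalar_prod_def)
    also have "\<dots> = 0" using i rows by (simp add: sum_subtractf)
    finally show "(M *\<^sub>v vec n (\<lambda>_. 1)) $ i = 0\<^sub>v n $ i" using i by simp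
  qed (simp add: M_def)
  moreover have "vec n (\<lambda>_. 1) \<noteq> (0\<^sub>v n :: real vec)"
    using \<open>n > 0\<close> by (metis index_vec index_zero_vec(1) zero_neq_one)
  ultimately have "det M = 0" using det_0_iff_vec_prod_zero_field[OF M] by (meson vec_carrier)
  then have "det (transpose_mat M) = 0" using det_transpose[OF M] by simp
  then obtain v where v: "v \<in> carrier_vec n" "v \<noteq> 0\<^sub>v n" "transpose_mat M *\<^sub>v v = 0\<^sub>v n"
    using det_0_iff_vec_prod_zero_field[of "transpose_mat M" n] M by auto
  have "v $ j = (\<Sum>i<n. v $ i * P i j)" if j: "j < n" for j
  proof -
    have delta: "(\<Sum>i<n. (if i = j then 1 else 0) * v $ i) = v $ j"
    proof -
      have "(\<Sum>i<n. (if i = j then 1 else 0) * v $ i) = (\<Sum>i<n. if i = j then v $ i else 0)"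
        by (rule sum.cong) auto
      then show ?thesis using j by simp
    qed
    have "0 = (transpose_mat M *\<^sub>v v) $ j" using v(3) j by simp
    also have "\<dots> = (\<Sum>i<n. (P i j - (if i = j then 1 else 0)) * v $ i)"
      using j v(1) unfolding M_def by (auto intro!: sum.cong simp: lessThan_atLeast0 scalar_prod_def)
    also have "\<dots> = (\<Sum>i<n. P i j * v $ i) - (\<Sum>i<n. (if i = j then 1 else 0) * v $ i)"
      by (simp only: left_diff_distrib sum_subtractf)
    also have "\<dots> = (\<Sum>i<n. v $ i * P i j) - v $ j"
      using delta by (simp add: mult.commute)
    finally show ?thesis by simp
  qed
  then show ?thesis using v(1,2) by blast
qed

lemma stochastic_left_fixpoint_exists:
  fixes P :: "'a \<Rightarrow> 'a \<Rightarrow> real"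
  assumes "finite S" and "S \<noteq> {}" and rows: "\<And>s. s \<in> S \<Longrightarrow> (\<Sum>t\<in>S. P s t) = 1"
  shows "\<exists>x. (\<exists>s\<in>S. x s \<noteq> 0) \<and> (\<forall>t\<in>S. x t = (\<Sum>s\<in>S. x s * P s t))"
proof -
  obtain xs where xs: "set xs = S" "distinct xs" using finite_distinct_list[OF \<open>finite S\<close>] by blast
  define n where "n = length xs"
  have bij: "bij_betw ((!) xs) {..<n} S" using xs unfolding n_def by (simp add: bij_betw_nth)
  have reindex: "(\<Sum>j<n. f (xs ! j)) = (\<Sum>s\<in>S. f s)" for f :: "'a \<Rightarrow> real"
    using sum.reindex_bij_betw[OF bij, of f] by simp
  have "n > 0" using xs \<open>S \<noteq> {}\<close> unfolding n_def by auto
  moreover have "(\<Sum>j<n. P (xs ! i) (xs ! j)) = 1" if "i < n" for i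
    using reindex[of "P (xs ! i)"] rows[of "xs ! i"] that xs unfolding n_def by auto
  ultimately obtain v where v: "v \<in> carrier_vec n" "v \<noteq> 0\<^sub>v n"
    "\<And>j. j < n \<Longrightarrow> v $ j = (\<Sum>i<n. v $ i * P (xs ! i) (xs ! j))"
    using left_fixpoint_of_unit_row_sums[of n "\<lambda>i j. P (xs ! i) (xs ! j)"] by blast
  define idx where "idx = the_inv_into {..<n} ((!) xs)"
  have idx: "idx t < n" "xs ! idx t = t" if "t \<in> S" for t
    using that bij unfolding idx_def by (auto simp: bij_betw_def the_inv_into_f_f f_the_inv_into_f)
  have idx_nth: "idx (xs ! j) = j" if "j < n" for j
    using that bij unfolding idx_def by (auto simp: bij_betw_def the_inv_into_f_f)
  define x where "x s = v $ idx s" for s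
  show ?thesis
  proof (intro exI conjI ballI)
    obtain i where "i < n" "v $ i \<noteq> 0" using v(1,2) by (metis carrier_vecD eq_vecI index_zero_vec)
    then show "\<exists>s\<in>S. x s \<noteq> 0"
      using xs idx_nth unfolding x_def n_def by (intro bexI[of _ "xs ! i"]) auto
  next
    fix t assume "t \<in> S"
    then have "x t = (\<Sum>i<n. v $ i * P (xs ! i) t)" using v(3) idx unfolding x_def by metis
    also have "\<dots> = (\<Sum>i<n. x (xs ! i) * P (xs ! i) t)" using idx_nth unfolding x_def by simp
    also have "\<dots> = (\<Sum>s\<in>S. x s * P s t)" by (rule reindex)
    finally show "x t = (\<Sum>s\<in>S. x s * P s t)" .
  qed
qed

definition stationary_on :: "'a set \<Rightarrow> ('a \<Rightarrow> 'a \<Rightarrow> real) \<Rightarrow> ('a \<Rightarrow> real) \<Rightarrow> bool" where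
  "stationary_on S P \<mu> \<longleftrightarrow> (\<forall>s. s \<notin> S \<longrightarrow> \<mu> s = 0) \<and> (\<forall>s \<in> S. \<mu> s \<ge> 0) \<and>
     (\<Sum>s \<in> S. \<mu> s) = 1 \<and> (\<forall>t \<in> S. \<mu> t = (\<Sum>s \<in> S. \<mu> s * P s t))"

lemma stationary_onD:
  assumes "stationary_on S P \<mu>"
  shows "\<And>s. s \<notin> S \<Longrightarrow> \<mu> s = 0" "\<And>s. s \<in> S \<Longrightarrow> \<mu> s \<ge> 0" "(\<Sum>s\<in>S. \<mu> s) = 1"
    "\<And>t. t \<in> S \<Longrightarrow> (\<Sum>s\<in>S. \<mu> s * P s t) = \<mu> t"
  using assms unfolding stationary_on_def by (blast intro: sym)+

locale irreducible_stochastic =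
  fixes S :: "'a set" and P :: "'a \<Rightarrow> 'a \<Rightarrow> real"
  assumes finite: "finite S" and nonempty: "S \<noteq> {}"
    and nonneg: "\<And>s t. P s t \<ge> 0"
    and row_sum: "\<And>s. s \<in> S \<Longrightarrow> (\<Sum>t\<in>S. P s t) = 1"
    and irreducible: "\<And>x y. x \<in> S \<Longrightarrow> y \<in> S \<Longrightarrow> (x, y) \<in> {(s, t). s \<in> S \<and> t \<in> S \<and> P s t > 0}\<^sup>*"
begin

lemma superinvariant_vanishes:
  assumes nonneg_f: "\<And>s. s \<in> S \<Longrightarrow> f s \<ge> 0"
    and super: "\<And>t. t \<in> S \<Longrightarrow> (\<Sum>s\<in>S. f s * P s t) \<le> f t"
    and "s0 \<in> S" and "f s0 = 0" and "x \<in> S"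
  shows "f x = 0"
  using irreducible[OF \<open>x \<in> S\<close> \<open>s0 \<in> S\<close>]
proof (induction rule: converse_rtrancl_induct)
  case base
  show ?case using \<open>f s0 = 0\<close> .
next
  case (step x y)
  then have "x \<in> S" "y \<in> S" "P x y > 0" "f y = 0" by auto
  have terms_nonneg: "\<And>s. s \<in> S \<Longrightarrow> f s * P s y \<ge> 0" using nonneg_f nonneg by simp
  have "0 \<le> (\<Sum>s\<in>S. f s * P s y)" using terms_nonneg by (rule sum_nonneg)
  then have "(\<Sum>s\<in>S. f s * P s y) = 0" using super[OF \<open>y \<in> S\<close>] \<open>f y = 0\<close> by linarith
  then have "f x * P x y = 0"
    using sum_nonneg_eq_0_iff[OF finite, of "\<lambda>s. f s * P s y"] terms_nonneg \<open>x \<in> S\<close> by blast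
  then show ?case using \<open>P x y > 0\<close> by simp
qed

lemma stationary_pos:
  assumes \<mu>: "stationary_on S P \<mu>" and "s \<in> S"
  shows "\<mu> s > 0"
proof (rule ccontr)
  assume "\<not> \<mu> s > 0"
  then have "\<mu> s = 0" using stationary_onD(2)[OF \<mu> \<open>s \<in> S\<close>] by simp
  then have "\<mu> x = 0" if "x \<in> S" for x
    using superinvariant_vanishes[of \<mu>, OF stationary_onD(2)[OF \<mu>] _ \<open>s \<in> S\<close> \<open>\<mu> s = 0\<close> that]
      stationary_onD(4)[OF \<mu>] by simp
  then show False using stationary_onD(3)[OF \<mu>] by simp
qed

lemma stationary_unique:
  assumes \<mu>: "stationary_on S P \<mu>" and \<nu>: "stationary_on S P \<nu>"
  shows "\<nu> = \<mu>"
proof -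
  \<comment> \<open>\<nu> - c \<mu> for the largest c keeping it nonnegative vanishes somewhere, hence everywhere\<close>
  define c where "c = Min ((\<lambda>s. \<nu> s / \<mu> s) ` S)"
  have "c \<in> (\<lambda>s. \<nu> s / \<mu> s) ` S" unfolding c_def using finite nonempty by (intro Min_in) auto
  then obtain s0 where s0: "s0 \<in> S" "c = \<nu> s0 / \<mu> s0" by blast
  define f where "f s = \<nu> s - c * \<mu> s" for s
  have f_nonneg: "f s \<ge> 0" if "s \<in> S" for s
  proof -
    have "c \<le> \<nu> s / \<mu> s" unfolding c_def using finite that by simp
    then show ?thesis using stationary_pos[OF \<mu> that] unfolding f_def by (simp add: pos_le_divide_eq)
  qed
  have f_invariant: "(\<Sum>s\<in>S. f s * P s t) = f t" if "t \<in> S" for t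
  proof -
    have "(\<Sum>s\<in>S. f s * P s t) = (\<Sum>s\<in>S. \<nu> s * P s t) - c * (\<Sum>s\<in>S. \<mu> s * P s t)"
      unfolding f_def by (simp add: left_diff_distrib sum_subtractf sum_distrib_left mult.assoc)
    also have "\<dots> = f t" using stationary_onD(4)[OF \<mu> that] stationary_onD(4)[OF \<nu> that] unfolding f_def by simp
    finally show ?thesis .
  qed
  have "f s0 = 0" using s0 stationary_pos[OF \<mu> s0(1)] unfolding f_def by simp
  then have "f s = 0" if "s \<in> S" for s
    using superinvariant_vanishes[of f, OF f_nonneg _ s0(1) \<open>f s0 = 0\<close> that] f_invariant by simp
  then have proportional: "\<nu> s = c * \<mu> s" if "s \<in> S" for s
    using that unfolding f_def by simp
  have "1 = (\<Sum>s\<in>S. c * \<mu> s)" using stationary_onD(3)[OF \<nu>] proportional by simp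
  also have "\<dots> = c" using stationary_onD(3)[OF \<mu>] by (simp add: sum_distrib_left[symmetric])
  finally have "c = 1" by simp
  show ?thesis
  proof
    fix s
    show "\<nu> s = \<mu> s"
      using proportional \<open>c = 1\<close> stationary_onD(1)[OF \<mu>] stationary_onD(1)[OF \<nu>] by (cases "s \<in> S") auto
  qed
qed

lemma stationary_exists: "\<exists>\<mu>. stationary_on S P \<mu>"
proof -
  obtain x where x_nonzero: "\<exists>s\<in>S. x s \<noteq> 0" and x_fix: "\<And>t. t \<in> S \<Longrightarrow> x t = (\<Sum>s\<in>S. x s * P s t)"
    using stochastic_left_fixpoint_exists[of S P, OF finite nonempty row_sum] by blast
  \<comment> \<open>|x| \<le> |x| P pointwise and both have the same total mass, so they agree\<close>
  define y where "y t = (if t \<in> S then \<bar>x t\<bar> else 0)" for t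
  have y_super: "y t \<le> (\<Sum>s\<in>S. y s * P s t)" if "t \<in> S" for t
  proof -
    have "y t = \<bar>\<Sum>s\<in>S. x s * P s t\<bar>" using x_fix that unfolding y_def by simp
    also have "\<dots> \<le> (\<Sum>s\<in>S. \<bar>x s * P s t\<bar>)" by (rule sum_abs)
    also have "\<dots> = (\<Sum>s\<in>S. y s * P s t)"
      unfolding y_def using nonneg by (intro sum.cong) (auto simp: abs_mult)
    finally show ?thesis .
  qed
  have "(\<Sum>t\<in>S. \<Sum>s\<in>S. y s * P s t) = (\<Sum>s\<in>S. y s * (\<Sum>t\<in>S. P s t))"
    by (subst sum.swap) (simp add: sum_distrib_left)
  also have "\<dots> = (\<Sum>s\<in>S. y s)" using row_sum by simp
  finally have "(\<Sum>t\<in>S. (\<Sum>s\<in>S. y s * P s t) - y t) = 0" by (simp add: sum_subtractf)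
  then have y_invariant: "\<forall>t\<in>S. (\<Sum>s\<in>S. y s * P s t) - y t = 0"
    using sum_nonneg_eq_0_iff[OF finite, of "\<lambda>t. (\<Sum>s\<in>S. y s * P s t) - y t"] y_super by auto
  define Y where "Y = (\<Sum>s\<in>S. y s)"
  have "Y > 0"
  proof -
    obtain s where s: "s \<in> S" "x s \<noteq> 0" using x_nonzero by blast
    then have "y s \<le> Y" unfolding Y_def using finite by (intro member_le_sum) (auto simp: y_def)
    moreover have "y s > 0" using s unfolding y_def by simp
    ultimately show ?thesis by simp
  qed
  have "stationary_on S P (\<lambda>t. y t / Y)"
    unfolding stationary_on_def
  proof (intro conjI allI ballI impI)
    show "(\<Sum>s\<in>S. y s / Y) = 1"
      using \<open>Y > 0\<close> unfolding Y_def by (simp add: sum_divide_distrib[symmetric])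
    fix t assume "t \<in> S"
    then show "y t / Y = (\<Sum>s\<in>S. y s / Y * P s t)"
      using y_invariant by (simp add: sum_divide_distrib[symmetric])
  qed (use \<open>Y > 0\<close> in \<open>auto simp: y_def\<close>)
  then show ?thesis by blast
qed

lemma ex1_stationary: "\<exists>!\<mu>. stationary_on S P \<mu>"
  using stationary_exists stationary_unique by blast

end

locale pvass2_bscc =
  fixes A :: "'q pvass" and S :: "'q set"
  assumes wf: "wf_pvass A" and dim2: "dim A = 2" and bscc: "is_bscc_CA A S"
begin

lemma rule_states: "(p, \<kappa>, q) \<in> rules A \<Longrightarrow> p \<in> states A \<and> q \<in> states A"
  using wf unfolding wf_pvass_def by fastforce

lemma weight_pos: "\<rho> \<in> rules A \<Longrightarrow> weight A \<rho> > 0"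
  using wf unfolding wf_pvass_def by auto

lemma rule_unique: "(p, \<kappa>, q) \<in> rules A \<Longrightarrow> (p, \<kappa>', q) \<in> rules A \<Longrightarrow> \<kappa> = \<kappa>'"
  using wf unfolding wf_pvass_def by blast

lemma update2_cases: "(p, \<kappa>, q) \<in> rules A \<Longrightarrow> \<kappa> 2 \<in> {-1, 0, 1}"
  using wf dim2 unfolding wf_pvass_def by fastforce

lemma finite_rules: "finite (rules A)"
proof -
  have "inj_on (\<lambda>\<rho>. (fst \<rho>, snd (snd \<rho>))) (rules A)"
    by (auto simp: inj_on_def dest: rule_unique)
  moreover have "(\<lambda>\<rho>. (fst \<rho>, snd (snd \<rho>))) ` rules A \<subseteq> states A \<times> states A"
    using rule_states by fastforce
  moreover have "finite (states A)" using wf unfolding wf_pvass_def by blast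
  ultimately show ?thesis by (meson finite_SigmaI finite_imageD finite_subset)
qed

lemma S_nonempty: "S \<noteq> {}"
  using bscc unfolding is_bscc_CA_def is_bscc_def by blast

lemma finite_S: "finite S"
  using bscc wf unfolding is_bscc_CA_def is_bscc_def wf_pvass_def by (meson finite_subset)

lemma CA_prob_pos: "(s, \<kappa>, t) \<in> rules A \<Longrightarrow> CA_prob A s t > 0"
proof -
  assume r: "(s, \<kappa>, t) \<in> rules A"
  let ?Rst = "{\<rho> \<in> rules A. fst \<rho> = s \<and> snd (snd \<rho>) = t}"
  have "0 < real (weight A (s, \<kappa>, t))" using weight_pos[OF r] by simp
  also have "\<dots> \<le> (\<Sum>\<rho>\<in>?Rst. real (weight A \<rho>))"
    using r finite_rules by (intro member_le_sum) auto
  finally have "0 < (\<Sum>\<rho>\<in>?Rst. real (weight A \<rho>))" .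
  moreover have "(\<Sum>\<rho>\<in>?Rst. real (weight A \<rho>)) \<le> out_weight A s"
    unfolding out_weight_def using finite_rules by (intro sum_mono2) auto
  ultimately show ?thesis unfolding CA_prob_def by auto
qed

lemma CA_prob_nonneg: "CA_prob A s t \<ge> 0"
  unfolding CA_prob_def out_weight_def by (auto intro!: divide_nonneg_nonneg sum_nonneg)

lemma rule_edge_if_CA_prob_pos:
  assumes "CA_prob A s t > 0"
  shows "(s, t) \<in> rule_edges A"
proof (rule ccontr)
  assume "(s, t) \<notin> rule_edges A"
  then have "{\<rho> \<in> rules A. fst \<rho> = s \<and> snd (snd \<rho>) = t} = {}" unfolding rule_edges_def by (auto simp: split_paired_all)
  then have "CA_prob A s t = 0" unfolding CA_prob_def by (simp only: sum.empty div_0)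
  then show False using assms by simp
qed

lemma rule_target_in_S: "s \<in> S \<Longrightarrow> (s, \<kappa>, t) \<in> rules A \<Longrightarrow> t \<in> S"
  using bscc rule_states CA_prob_pos unfolding is_bscc_CA_def is_bscc_def by blast

lemma CA_irreducible:
  assumes "x \<in> S" and "y \<in> S"
  shows "(x, y) \<in> {(s, t). s \<in> S \<and> t \<in> S \<and> CA_prob A s t > 0}\<^sup>*"
proof -
  have "(x, y) \<in> ({(p, q). CA_prob A p q > 0} \<inter> states A \<times> states A)\<^sup>*"
    using bscc assms unfolding is_bscc_CA_def is_bscc_def by blast
  then have "(x, y) \<in> {(s, t). s \<in> S \<and> t \<in> S \<and> CA_prob A s t > 0}\<^sup>* \<and> y \<in> S"
  proof (induction rule: rtrancl_induct)
    case base
    show ?case using \<open>x \<in> S\<close> by simp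
  next
    case (step y z)
    then have "z \<in> S" using bscc unfolding is_bscc_CA_def is_bscc_def by blast
    with step show ?case by (auto intro: rtrancl_into_rtrancl)
  qed
  then show ?thesis ..
qed

lemma rule_path_in_S:
  assumes "x \<in> S" and "y \<in> S"
  shows "(x, y) \<in> (rule_edges A)\<^sup>*"
proof -
  have "{(s, t). s \<in> S \<and> t \<in> S \<and> CA_prob A s t > 0} \<subseteq> rule_edges A"
    using rule_edge_if_CA_prob_pos by blast
  then show ?thesis using CA_irreducible[OF assms] by (meson rtrancl_mono subsetD)
qed

lemma out_weight_pos:
  assumes "(s, \<kappa>, t) \<in> rules A"
  shows "out_weight A s > 0"
proof -
  have "0 < real (weight A (s, \<kappa>, t))" using weight_pos[OF assms] by simp
  also have "\<dots> \<le> out_weight A s"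
    unfolding out_weight_def using assms finite_rules by (intro member_le_sum) auto
  finally show ?thesis .
qed

lemma sum_over_rule_targets:
  assumes "s \<in> S"
  shows "(\<Sum>\<rho>\<in>{\<rho> \<in> rules A. fst \<rho> = s}. f (snd (snd \<rho>)) * real (weight A \<rho>) / out_weight A s)
       = (\<Sum>t\<in>S. f t * CA_prob A s t)"
proof -
  let ?R = "{\<rho> \<in> rules A. fst \<rho> = s}"
  have "(\<lambda>\<rho>. snd (snd \<rho>)) ` ?R \<subseteq> S" using rule_target_in_S \<open>s \<in> S\<close> by force
  then have "(\<Sum>\<rho>\<in>?R. f (snd (snd \<rho>)) * real (weight A \<rho>) / out_weight A s)
      = (\<Sum>t\<in>S. \<Sum>\<rho>\<in>{\<rho> \<in> ?R. snd (snd \<rho>) = t}. f (snd (snd \<rho>)) * real (weight A \<rho>) / out_weight A s)"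
    using finite_rules finite_S by (intro sum.group[symmetric]) auto
  also have "\<dots> = (\<Sum>t\<in>S. \<Sum>\<rho>\<in>{\<rho> \<in> rules A. fst \<rho> = s \<and> snd (snd \<rho>) = t}. f t * real (weight A \<rho>) / out_weight A s)"
    by (intro sum.cong) auto
  also have "\<dots> = (\<Sum>t\<in>S. f t * CA_prob A s t)"
    unfolding CA_prob_def by (simp add: sum_distrib_left sum_divide_distrib)
  finally show ?thesis .
qed

lemma CA_row_sum:
  assumes "s \<in> S" and "(s, \<kappa>, t) \<in> rules A"
  shows "(\<Sum>t\<in>S. CA_prob A s t) = 1"
  using sum_over_rule_targets[OF \<open>s \<in> S\<close>, of "\<lambda>_. 1"] out_weight_pos[OF assms(2)]
  by (simp add: sum_divide_distrib[symmetric] out_weight_def)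

lemma irreducible_stochastic_CA:
  assumes live: "\<And>s. s \<in> S \<Longrightarrow> \<exists>\<kappa> t. (s, \<kappa>, t) \<in> rules A"
  shows "irreducible_stochastic S (CA_prob A)"
  using finite_S S_nonempty CA_prob_nonneg CA_irreducible live CA_row_sum
  by unfold_locales blast+

lemma mu_S_stationary:
  assumes live: "\<And>s. s \<in> S \<Longrightarrow> \<exists>\<kappa> t. (s, \<kappa>, t) \<in> rules A"
  shows "stationary_on S (CA_prob A) (mu_S A S)"
proof -
  interpret irreducible_stochastic S "CA_prob A" using irreducible_stochastic_CA[OF live] .
  have "invariant_dist A S = stationary_on S (CA_prob A)"
    unfolding invariant_dist_def stationary_on_def by blast
  then show ?thesis unfolding mu_S_def using theI'[OF ex1_stationary] by simp
qed

definition drift :: "nat \<Rightarrow> 'q \<Rightarrow> real" where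
  "drift i s = (\<Sum>\<rho> \<in> {\<rho> \<in> rules A. fst \<rho> = s}.
                  real_of_int (fst (snd \<rho>) i) * real (weight A \<rho>) / out_weight A s)"

lemma trend_eq_drift: "trend A S i = (\<Sum>s\<in>S. mu_S A S s * drift i s)"
  unfolding trend_def drift_def ..

lemma out_rule_if_trend_nonzero:
  assumes "trend A S i \<noteq> 0" and "s \<in> S"
  shows "\<exists>\<kappa> t. (s, \<kappa>, t) \<in> rules A"
proof (rule ccontr)
  assume none: "\<nexists>\<kappa> t. (s, \<kappa>, t) \<in> rules A"
  have "y = s" if "y \<in> S" for y
    using rule_path_in_S[OF \<open>s \<in> S\<close> that] none unfolding rule_edges_def
    by (auto elim: converse_rtranclE)
  then have "S = {s}" using \<open>s \<in> S\<close> by blast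
  moreover have "{\<rho> \<in> rules A. fst \<rho> = s} = {}" using none by (auto simp: split_paired_all)
  then have "drift i s = 0" unfolding drift_def by (simp only: sum.empty)
  ultimately show False using assms(1) unfolding trend_eq_drift by simp
qed

lemma expected_potential_gain_le_drift:
  assumes "s \<in> S" and "(s, \<kappa>0, t0) \<in> rules A"
    and pot: "\<And>\<kappa> t. (s, \<kappa>, t) \<in> rules A \<Longrightarrow> pot t - pot s \<le> real_of_int (\<kappa> i)"
  shows "(\<Sum>t\<in>S. pot t * CA_prob A s t) - pot s \<le> drift i s"
proof -
  have "(\<Sum>t\<in>S. pot t * CA_prob A s t) - pot s = (\<Sum>t\<in>S. (pot t - pot s) * CA_prob A s t)"
    using CA_row_sum[OF assms(1,2)] by (simp add: left_diff_distrib sum_subtractf sum_distrib_left[symmetric])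
  also have "\<dots> = (\<Sum>\<rho>\<in>{\<rho> \<in> rules A. fst \<rho> = s}.
                     (pot (snd (snd \<rho>)) - pot s) * real (weight A \<rho>) / out_weight A s)"
    using sum_over_rule_targets[OF \<open>s \<in> S\<close>, of "\<lambda>t. pot t - pot s"] by simp
  also have "\<dots> \<le> drift i s"
    unfolding drift_def
  proof (rule sum_mono)
    fix \<rho> assume "\<rho> \<in> {\<rho> \<in> rules A. fst \<rho> = s}"
    then obtain \<kappa> t where \<rho>: "\<rho> = (s, \<kappa>, t)" "(s, \<kappa>, t) \<in> rules A" by (cases \<rho>) auto
    then show "(pot (snd (snd \<rho>)) - pot s) * real (weight A \<rho>) / out_weight A s
             \<le> real_of_int (fst (snd \<rho>) i) * real (weight A \<rho>) / out_weight A s"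
      using pot[OF \<rho>(2)] by (auto intro!: divide_right_mono mult_right_mono simp: out_weight_def sum_nonneg)
  qed
  finally show ?thesis .
qed

lemma trend_nonneg_if_potential:
  assumes live: "\<And>s. s \<in> S \<Longrightarrow> \<exists>\<kappa> t. (s, \<kappa>, t) \<in> rules A"
    and pot: "\<And>s \<kappa> t. s \<in> S \<Longrightarrow> (s, \<kappa>, t) \<in> rules A \<Longrightarrow> pot t - pot s \<le> real_of_int (\<kappa> i)"
  shows "trend A S i \<ge> 0"
proof -
  define \<mu> where "\<mu> = mu_S A S"
  have \<mu>: "stationary_on S (CA_prob A) \<mu>" unfolding \<mu>_def using mu_S_stationary[OF live] .
  \<comment> \<open>stationarity makes the expected potential gain vanish on average\<close>
  have "0 = (\<Sum>t\<in>S. pot t * (\<Sum>s\<in>S. \<mu> s * CA_prob A s t)) - (\<Sum>s\<in>S. \<mu> s * pot s)"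
    using \<mu> unfolding stationary_on_def by (simp add: mult.commute)
  also have "\<dots> = (\<Sum>s\<in>S. \<Sum>t\<in>S. \<mu> s * (pot t * CA_prob A s t)) - (\<Sum>s\<in>S. \<mu> s * pot s)"
    by (subst sum.swap) (simp add: sum_distrib_left mult.left_commute)
  also have "\<dots> = (\<Sum>s\<in>S. \<mu> s * ((\<Sum>t\<in>S. pot t * CA_prob A s t) - pot s))"
    by (simp add: right_diff_distrib sum_subtractf sum_distrib_left)
  also have "\<dots> \<le> (\<Sum>s\<in>S. \<mu> s * drift i s)"
  proof (rule sum_mono)
    fix s assume "s \<in> S"
    then obtain \<kappa> t where "(s, \<kappa>, t) \<in> rules A" using live by blast
    then show "\<mu> s * ((\<Sum>t\<in>S. pot t * CA_prob A s t) - pot s) \<le> \<mu> s * drift i s"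
      using \<mu> \<open>s \<in> S\<close> expected_potential_gain_le_drift pot
      unfolding stationary_on_def by (intro mult_left_mono) blast+
  qed
  finally show ?thesis unfolding trend_eq_drift \<mu>_def .
qed

text \<open>The second counter is at least the floor c whenever a rule is applied, so a walk with
  floor 1 from height 1 to height 0 is a run of A_2 from q(1) that visits height 0 only at
  its end, in r(0).\<close>

inductive walk :: "int \<Rightarrow> 'q \<Rightarrow> int \<Rightarrow> nat \<Rightarrow> 'q \<Rightarrow> int \<Rightarrow> bool" where
  refl: "walk c q h 0 q h"
| step: "(q, \<kappa>, p) \<in> rules A \<Longrightarrow> c \<le> h \<Longrightarrow> walk c p (h + \<kappa> 2) n r h' \<Longrightarrow> walk c q h (Suc n) r h'"

lemma walk_shift: "walk c q h n r h' \<Longrightarrow> walk (c + d) q (h + d) n r (h' + d)"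
proof (induction rule: walk.induct)
  case (refl c q h)
  show ?case by (rule walk.refl)
next
  case (step q \<kappa> p c h n r h')
  then show ?case using walk.step[OF step.hyps(1), of "c + d" "h + d"] by (simp add: algebra_simps)
qed

lemma walk_floor_mono: "walk c q h n r h' \<Longrightarrow> c' \<le> c \<Longrightarrow> walk c' q h n r h'"
  by (induction rule: walk.induct) (auto intro: walk.intros)

lemma walk_trans: "walk c q h n r h' \<Longrightarrow> walk c r h' m s h'' \<Longrightarrow> walk c q h (n + m) s h''"
  by (induction rule: walk.induct) (auto intro: walk.intros)

lemma walk_snoc:
  "walk c q h n r h' \<Longrightarrow> (r, \<kappa>, p) \<in> rules A \<Longrightarrow> c \<le> h' \<Longrightarrow> walk c q h (Suc n) p (h' + \<kappa> 2)"
  using walk_trans[of c q h n r h' 1 p "h' + \<kappa> 2"] by (auto intro: walk.intros)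

lemma walk_in_S: "walk c q h n r h' \<Longrightarrow> q \<in> S \<Longrightarrow> r \<in> S"
  by (induction rule: walk.induct) (auto dest: rule_target_in_S)

lemma walk_final_height: "walk c q h n r h' \<Longrightarrow> c - 1 \<le> h \<Longrightarrow> c - 1 \<le> h'"
  by (induction rule: walk.induct) (auto dest: update2_cases)

lemma walk_from_rule_path: "(q, r) \<in> (rule_edges A)\<^sup>* \<Longrightarrow> \<exists>c n h'. c \<le> h \<and> walk c q h n r h'"
proof (induction arbitrary: h rule: converse_rtrancl_induct)
  case base
  show ?case by (blast intro: walk.refl)
next
  case (step q p)
  then obtain \<kappa> where rule: "(q, \<kappa>, p) \<in> rules A" unfolding rule_edges_def by blast
  obtain c n h' where "walk c p (h + \<kappa> 2) n r h'" using step.IH by blast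
  then have "walk (min c h) p (h + \<kappa> 2) n r h'" by (rule walk_floor_mono) simp
  then have "walk (min c h) q h (Suc n) r h'" using walk.step[OF rule] by simp
  then show ?case by (intro exI[of _ "min c h"]) auto
qed

lemma walk_first_passage:
  "walk c q h n r h' \<Longrightarrow> h' < h \<Longrightarrow>
     \<exists>p n1 n2. walk h q h n1 p (h - 1) \<and> walk c p (h - 1) n2 r h' \<and> n1 + n2 = n"
proof (induction n arbitrary: q h rule: less_induct)
  case (less n)
  from less.prems(1) show ?case
  proof cases
    case refl
    then show ?thesis using less.prems(2) by simp
  next
    case (step \<kappa> p1 m)
    consider "\<kappa> 2 = -1" | "\<kappa> 2 = 0" | "\<kappa> 2 = 1" using update2_cases[OF step(2)] by auto
    then show ?thesis
    proof cases
      case 1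
      have "walk h q h 1 p1 (h - 1)" using walk.step[OF step(2), of h h] 1 by (auto intro: walk.refl)
      then show ?thesis using step 1 by (intro exI[of _ p1] exI[of _ 1] exI[of _ m]) auto
    next
      case 2
      obtain p n1 n2 where p: "walk h p1 h n1 p (h - 1)" "walk c p (h - 1) n2 r h'" "n1 + n2 = m"
        using less.IH[of m p1 h] step 2 less.prems(2) by auto
      have "walk h q h (Suc n1) p (h - 1)" using walk.step[OF step(2), of h h] 2 p(1) by auto
      then show ?thesis using p step by (intro exI[of _ p] exI[of _ "Suc n1"] exI[of _ n2]) auto
    next
      case 3
      \<comment> \<open>the walk first has to come back down from h + 1 to h\<close>
      obtain p' a1 a2 where p': "walk (h + 1) p1 (h + 1) a1 p' h" "walk c p' h a2 r h'" "a1 + a2 = m"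
        using less.IH[of m p1 "h + 1"] step 3 less.prems(2) by auto
      obtain p b1 b2 where p: "walk h p' h b1 p (h - 1)" "walk c p (h - 1) b2 r h'" "b1 + b2 = a2"
        using less.IH[of a2 p' h] p' step less.prems(2) by auto
      have "walk h p1 (h + 1) a1 p' h" using walk_floor_mono[OF p'(1)] by simp
      then have "walk h p1 (h + 1) (a1 + b1) p (h - 1)" using walk_trans p(1) by blast
      then have "walk h q h (Suc (a1 + b1)) p (h - 1)" using walk.step[OF step(2), of h h] 3 by auto
      then show ?thesis using p p' step by (intro exI[of _ p] exI[of _ "Suc (a1 + b1)"] exI[of _ b2]) auto
    qed
  qed
qed

definition descent :: "('q \<times> 'q) set" where
  "descent = {(q, r). q \<in> S \<and> (\<exists>n. walk 1 q 1 n r 0)}"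

lemma descent_rtrancl_if_walk:
  assumes "walk 1 q (int k) n r 0" and "q \<in> S"
  shows "(q, r) \<in> descent\<^sup>*"
  using assms
proof (induction k arbitrary: q n)
  case 0
  then have "q = r" by (auto elim: walk.cases)
  then show ?case by simp
next
  case (Suc k q n)
  obtain p n1 n2 where p: "walk (int (Suc k)) q (int (Suc k)) n1 p (int k)" "walk 1 p (int k) n2 r 0"
    using walk_first_passage[OF Suc.prems(1)] by auto
  have "walk 1 q 1 n1 p 0" using walk_shift[OF p(1), of "- int k"] by simp
  then have "(q, p) \<in> descent" using Suc.prems(2) unfolding descent_def by blast
  moreover have "(p, r) \<in> descent\<^sup>*" using Suc.IH[OF p(2) walk_in_S[OF p(1) Suc.prems(2)]] .
  ultimately show ?case by (rule converse_rtrancl_into_rtrancl)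
qed

lemma rules_proj2: "rules (proj2 A) = (\<lambda>(s, \<kappa>, t). (s, (\<lambda>_. 0)(1 := \<kappa> 2), t)) ` rules A"
  unfolding proj2_def by force

lemma weight_proj2: "(q, \<kappa>, p) \<in> rules A \<Longrightarrow> weight (proj2 A) (q, \<kappa>', p) = weight A (q, \<kappa>, p)"
proof -
  assume rule: "(q, \<kappa>, p) \<in> rules A"
  then have "(THE \<rho>. \<rho> \<in> rules A \<and> fst \<rho> = q \<and> snd (snd \<rho>) = p) = (q, \<kappa>, p)"
    by (rule_tac the_equality) (auto dest: rule_unique)
  then show ?thesis unfolding proj2_def by simp
qed

lemma walk_reach_within_pos:
  "walk c q h n r h' \<Longrightarrow> c = 1 \<Longrightarrow> h' = 0 \<Longrightarrow>
     reach_within (proj2 A) {cfg1 r 0} {cfg1 r' 0 | r'. r' \<noteq> r} n (cfg1 q (nat h)) > 0"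
proof (induction rule: walk.induct)
  case (refl c q h)
  then show ?case by simp
next
  case (step q \<kappa> p c h n r h')
  let ?A2 = "proj2 A" and ?x = "cfg1 q (nat h)"
  let ?rw = "reach_within ?A2 {cfg1 r 0} {cfg1 r' 0 | r'. r' \<noteq> r} n"
  define \<rho> where "\<rho> = (q, (\<lambda>_::nat. 0::int)(1 := \<kappa> 2), p)"
  have "h \<ge> 1" using step by simp
  then have not_stopped: "?x \<notin> {cfg1 r 0}" "?x \<notin> {cfg1 r' 0 | r'. r' \<noteq> r}"
    by (auto simp: cfg1_eq_iff)
  have enabled: "\<rho> \<in> enabled ?A2 ?x"
    unfolding enabled_def \<rho>_def using step.hyps(1) \<open>h \<ge> 1\<close>
    by (auto simp: rules_proj2 cfg1_def intro!: image_eqI[of _ _ "(q, \<kappa>, p)"])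
  have finite_enabled: "finite (enabled ?A2 ?x)"
    using finite_rules unfolding enabled_def rules_proj2 by simp
  have weight_\<rho>: "real (weight ?A2 \<rho>) > 0"
    unfolding \<rho>_def using weight_proj2[OF step.hyps(1)] weight_pos[OF step.hyps(1)] by simp
  also have "real (weight ?A2 \<rho>) \<le> enabled_weight ?A2 ?x"
    unfolding enabled_weight_def using finite_enabled enabled by (intro member_le_sum) auto
  finally have "enabled_weight ?A2 ?x > 0" .
  then have terms_nonneg: "0 \<le> real (weight ?A2 \<rho>') / enabled_weight ?A2 ?x * ?rw (apply_rule \<rho>' ?x)" for \<rho>'
    by (intro mult_nonneg_nonneg divide_nonneg_pos reach_within_nonneg) simp_all
  have "apply_rule \<rho> ?x = cfg1 p (nat (h + \<kappa> 2))"
    unfolding apply_rule_def \<rho>_def cfg1_def using \<open>h \<ge> 1\<close> by (auto simp: fun_eq_iff)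
  then have "?rw (apply_rule \<rho> ?x) > 0" using step.IH step.prems by simp
  then have "0 < (\<Sum>\<rho>'\<in>enabled ?A2 ?x. real (weight ?A2 \<rho>') / enabled_weight ?A2 ?x * ?rw (apply_rule \<rho>' ?x))"
    using weight_\<rho> \<open>enabled_weight ?A2 ?x > 0\<close> terms_nonneg by (intro sum_pos2[OF finite_enabled enabled]) simp_all
  also have "\<dots> = reach_within ?A2 {cfg1 r 0} {cfg1 r' 0 | r'. r' \<noteq> r} (Suc n) ?x"
    using not_stopped enabled by auto
  finally show ?case .
qed

lemma descent_subset_Gmat_pos: "descent \<subseteq> {(q, r). q \<in> S \<and> r \<in> S \<and> Gmat A S q r > 0} \<inter> S \<times> S"
proof
  fix x assume "x \<in> descent"
  then obtain q r n where x: "x = (q, r)" and "q \<in> S" and walk: "walk 1 q 1 n r 0"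
    unfolding descent_def by blast
  then have "r \<in> S" using walk_in_S by blast
  have "0 < reach_within (proj2 A) {cfg1 r 0} {cfg1 r' 0 | r'. r' \<noteq> r} n (cfg1 q 1)"
    using walk_reach_within_pos[OF walk] by simp
  then have "Gmat A S q r > 0"
    unfolding Gmat_def using reach_within_le_reach_before by (rule less_le_trans)
  then show "x \<in> {(q, r). q \<in> S \<and> r \<in> S \<and> Gmat A S q r > 0} \<inter> S \<times> S"
    using x \<open>q \<in> S\<close> \<open>r \<in> S\<close> by blast
qed

lemma potential_if_no_descent:
  assumes "q0 \<in> S" and no_descent: "\<And>n r. \<not> walk 1 q0 1 n r 0"
  shows "\<exists>pot. \<forall>s \<kappa> t. s \<in> S \<longrightarrow> (s, \<kappa>, t) \<in> rules A \<longrightarrow> pot t - pot s \<le> real_of_int (\<kappa> 2)"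
proof -
  \<comment> \<open>the potential of t is the least height at which t is reachable from q0(0)\<close>
  define D where "D t = {d. \<exists>c n. walk c q0 0 n t d}" for t
  have D_nonneg: "d \<ge> 0" if "d \<in> D t" for d t
  proof (rule ccontr)
    assume "\<not> d \<ge> 0"
    obtain c n where "walk c q0 0 n t d" using \<open>d \<in> D t\<close> unfolding D_def by blast
    then obtain p n1 where "walk 0 q0 0 n1 p (- 1)" using walk_first_passage \<open>\<not> d \<ge> 0\<close> by fastforce
    then have "walk 1 q0 1 n1 p 0" using walk_shift[of 0 q0 0 n1 p "- 1" 1] by simp
    then show False using no_descent by blast
  qed
  have D_nonempty: "\<exists>d. d \<in> D t" if "t \<in> S" for t
    using walk_from_rule_path[OF rule_path_in_S[OF \<open>q0 \<in> S\<close> that], of 0] unfolding D_def by blast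
  have D_step: "d + \<kappa> 2 \<in> D t" if "d \<in> D s" and rule: "(s, \<kappa>, t) \<in> rules A" for d s \<kappa> t
  proof -
    obtain c n where "walk c q0 0 n s d" using \<open>d \<in> D s\<close> unfolding D_def by blast
    then have "walk (min c d) q0 0 n s d" by (rule walk_floor_mono) simp
    then have "walk (min c d) q0 0 (Suc n) t (d + \<kappa> 2)" using walk_snoc[OF _ rule] by simp
    then show ?thesis unfolding D_def by blast
  qed
  define L where "L t = (LEAST k::nat. int k \<in> D t)" for t
  have L_le: "int (L t) \<le> d" if "d \<in> D t" for d t
    using Least_le[of "\<lambda>k. int k \<in> D t" "nat d"] that D_nonneg[OF that] unfolding L_def by simp
  have L_in: "int (L t) \<in> D t" if "t \<in> S" for t
    using D_nonempty[OF that] D_nonneg LeastI[of "\<lambda>k. int k \<in> D t"] unfolding L_def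
    by (metis int_nat_eq)
  have "real (L t) - real (L s) \<le> real_of_int (\<kappa> 2)" if "s \<in> S" "(s, \<kappa>, t) \<in> rules A" for s \<kappa> t
    using L_le[OF D_step[OF L_in[OF that(1)] that(2)]] by linarith
  then show ?thesis by (intro exI[of _ "\<lambda>t. real (L t)"]) simp
qed

lemma descent_exists:
  assumes "trend A S 2 < 0" and "q \<in> S"
  shows "\<exists>n r. walk 1 q 1 n r 0"
proof (rule ccontr)
  assume "\<nexists>n r. walk 1 q 1 n r 0"
  then obtain pot where pot: "\<And>s \<kappa> t. s \<in> S \<Longrightarrow> (s, \<kappa>, t) \<in> rules A \<Longrightarrow> pot t - pot s \<le> real_of_int (\<kappa> 2)"
    using potential_if_no_descent[OF \<open>q \<in> S\<close>] by blast
  have "\<And>s. s \<in> S \<Longrightarrow> \<exists>\<kappa> t. (s, \<kappa>, t) \<in> rules A"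
    using out_rule_if_trend_nonzero assms(1) by force
  then have "trend A S 2 \<ge> 0" using trend_nonneg_if_potential pot by blast
  then show False using assms(1) by simp
qed

lemma descent_from_any_height:
  assumes "trend A S 2 < 0" and "q \<in> S"
  shows "\<exists>n r. walk 1 q (int k) n r 0"
  using \<open>q \<in> S\<close>
proof (induction k arbitrary: q)
  case 0
  show ?case using walk.refl[of 1 q 0] by auto
next
  case (Suc k q)
  obtain n p where p: "walk 1 q 1 n p 0" using descent_exists[OF assms(1) Suc.prems] by blast
  then have "walk (1 + int k) q (1 + int k) n p (int k)" using walk_shift[OF p, of "int k"] by simp
  then have "walk 1 q (int (Suc k)) n p (int k)" using walk_floor_mono[of _ q] by simp
  moreover obtain m r where "walk 1 p (int k) m r 0" using Suc.IH walk_in_S[OF p Suc.prems] by blast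
  ultimately show ?case using walk_trans by blast
qed

lemma common_descendant:
  assumes "trend A S 2 < 0" and "q1 \<in> S" and "q2 \<in> S"
  shows "\<exists>r. (q1, r) \<in> descent\<^sup>* \<and> (q2, r) \<in> descent\<^sup>*"
proof -
  obtain c n h where "c \<le> 0" and to_q2: "walk c q1 0 n q2 h"
    using walk_from_rule_path[OF rule_path_in_S[OF assms(2,3)], of 0] by blast
  \<comment> \<open>lifting by 1 - c puts the floor at 1 and keeps the arrival height nonnegative\<close>
  have lifted: "walk 1 q1 (1 - c) n q2 (h + 1 - c)" using walk_shift[OF to_q2, of "1 - c"] by (simp add: algebra_simps)
  have "c - 1 \<le> h" using walk_final_height[OF to_q2] \<open>c \<le> 0\<close> by simp
  then obtain m r where from_q2: "walk 1 q2 (h + 1 - c) m r 0"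
    using descent_from_any_height[OF assms(1,3), of "nat (h + 1 - c)"] by auto
  have "(q1, r) \<in> descent\<^sup>*"
    using descent_rtrancl_if_walk[of q1 "nat (1 - c)" "n + m" r] walk_trans[OF lifted from_q2]
      \<open>c \<le> 0\<close> assms(2) by simp
  moreover have "(q2, r) \<in> descent\<^sup>*"
    using descent_rtrancl_if_walk[of q2 "nat (h + 1 - c)" m r] from_q2 \<open>c - 1 \<le> h\<close> assms(3) by simp
  ultimately show ?thesis by blast
qed

end

theorem mainTheorem20:
  fixes A :: "'q pvass" and S :: "'q set"
  assumes "wf_pvass A" and "dim A = 2"
    and "is_bscc_CA A S"
    and "trend A S 2 < 0"
  shows "\<exists>!C. is_bscc S {(q, r). q \<in> S \<and> r \<in> S \<and> Gmat A S q r > 0} C"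
proof -
  interpret pvass2_bscc A S using assms(1-3) by unfold_locales
  show ?thesis
  proof (rule ex1_is_bscc_if_common_descendants[OF finite_S S_nonempty])
    fix x y assume "x \<in> S" and "y \<in> S"
    then obtain z where "(x, z) \<in> descent\<^sup>*" and "(y, z) \<in> descent\<^sup>*"
      using common_descendant[OF assms(4)] by blast
    then show "\<exists>z. (x, z) \<in> ({(q, r). q \<in> S \<and> r \<in> S \<and> Gmat A S q r > 0} \<inter> S \<times> S)\<^sup>* \<and>
                   (y, z) \<in> ({(q, r). q \<in> S \<and> r \<in> S \<and> Gmat A S q r > 0} \<inter> S \<times> S)\<^sup>*"
      using rtrancl_mono[OF descent_subset_Gmat_pos] by blast
  qed
qed

end
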